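(* Let $\mathcal{R} = \mathcal{R}_{\rm BL} \cup \mathcal{R}_{\rm HS}$ be the union of the family of all bottomless rectangles and the family of all horizontal strips. Then $m_{\mathcal{R}}(2) = \infty$; that is, for every $m \geq 1$ there is a finite point set $V \subset \mathbb{R}^2$ such that $\mathcal{H}(V,\mathcal{R},m)$ admits no polychromatic $2$-coloring (equivalently, for every $2$-coloring of $V$ some hyperedge of $\mathcal{H}(V,\mathcal{R},m)$ is monochromatic).
   Context: For a finite set $V \subset \mathbb{R}^2$ and a family $\mathcal{R}$ of subsets of $\mathbb{R}^2$ (called ranges), $\mathcal{H}(V,\mathcal{R})$ is the hypergraph on vertex set $V$ whose hyperedges are the sets $V \cap R$ for $R \in \mathcal{R}$, and $\mathcal{H}(V,\mathcal{R},m)$ is its subhypergraph consisting of the hyperedges of size exactly $m$. A coloring $c\colon V \to [k]$ is polychromatic for a hypergraph if every hyperedge contains a vertex of each of the $k$ colors. Point sets are assumed to be in general position: pairwise distinct $x$-coordinates, pairwise distinct $y$-coordinates, and pairwise distinct values of $x+y$. For a range family $\mathcal{R}$ and $k \geq 1$, $m_{\mathcal{R}}(k)$ is the smallest $m$ such that for every finite $V \subset \mathbb{R}^2$ in general position the hypergraph $\mathcal{H}(V,\mathcal{R},m)$ admits a polychromatic $k$-coloring, and $m_{\mathcal{R}}(k)=\infty$ if no such $m$ exists. Bottomless rectangles: $\mathcal{R}_{\rm BL} = \{\{(x,y) : a_1 \leq x \leq a_2,\ y \leq b\} : a_1,a_2,b \in \mathbb{R}\}$. Horizontal strips: $\mathcal{R}_{\rm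 HS} = \{\{(x,y) : b_1 \leq y \leq b_2\} : b_1,b_2 \in \mathbb{R}\}$. *)

theory Defs
  imports "HOL-Analysis.Analysis"
begin

type_synonym point = "real \<times> real"

definition general_position :: "point set \<Rightarrow> bool" where
  "general_position V \<longleftrightarrow>
     (\<forall>p\<in>V. \<forall>q\<in>V. p \<noteq> q \<longrightarrow>
        fst p \<noteq> fst q \<and> snd p \<noteq> snd q \<and> fst p + snd p \<noteq> fst q + snd q)"

definition R_BL :: "point set set" where
  "R_BL = {{(x, y). a1 \<le> x \<and> x \<le> a2 \<and> y \<le> b} | a1 a2 b. True}"

definition R_HS :: "point set set" where
  "R_HS = {{(x, y). b1 \<le> y \<and> y \<le> b2} | b1 b2. True}"

definition hyperedges :: "point set \<Rightarrow> point set set \<Rightarrow> point set set" where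
  "hyperedges V \<R> = {V \<inter> R | R. R \<in> \<R>}"

definition hyperedges_m :: "point set \<Rightarrow> point set set \<Rightarrow> nat \<Rightarrow> point set set" where
  "hyperedges_m V \<R> m = {e \<in> hyperedges V \<R>. card e = m}"

definition polychromatic :: "point set \<Rightarrow> point set set \<Rightarrow> nat \<Rightarrow> (point \<Rightarrow> nat) \<Rightarrow> bool" where
  "polychromatic V E k c \<longleftrightarrow>
     (\<forall>v\<in>V. c v \<in> {1..k}) \<and> (\<forall>e\<in>E. \<forall>i\<in>{1..k}. \<exists>v\<in>e. c v = i)"

definition m_R_infinite :: "point set set \<Rightarrow> nat \<Rightarrow> bool" where
  "m_R_infinite \<R> k \<longleftrightarrow>
     (\<forall>m::nat. \<not> (\<forall>V. finite V \<and> general_position V \<longrightarrow>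
        (\<exists>c. polychromatic V (hyperedges_m V \<R> m) k c)))"

end

(* A (k, l)-gadget in a box is a finite point set together with red ports (families of bottomless
   rectangles whose tops can be placed in a common empty horizontal band) and blue ports
   (horizontal strips) such that every red/blue colouring puts k red points into some red port or
   l blue points into some blue port. Gadgets exist by induction on k + l. Put a (k, l+1)-gadget
   into the left half of the box and, for every red port q of it, a (k+1, l)-gadget into a thin
   slot of the right half, at heights inside the empty band of q. Above every blue port b of such a
   copy add one new point near the left end of q; it extends b to a new blue port and opens a new
   red port with the x-range of q and its band just above the point. If red wins k at q and blue
   wins l at b, the colour of the new point completes one of the two wins. Finally a horizontal
   stretch puts an (m, m)-gadget into general position. *)

theory Submission
  imports Defs
begin

section \<open>Ports and the forcing game\<close>

datatype red_port = RedPort (rp_start: real) (rp_low: real) (rp_high: real) (rp_end: real)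
datatype blue_port = BluePort (bp_low: real) (bp_high: real)

definition red_set :: "point set \<Rightarrow> red_port \<Rightarrow> real \<Rightarrow> point set" where
  "red_set P q z = {p \<in> P. rp_start q < fst p \<and> fst p \<le> z \<and> snd p < rp_low q}"

definition blue_set :: "point set \<Rightarrow> blue_port \<Rightarrow> point set" where
  "blue_set P b = {p \<in> P. bp_low b \<le> snd p \<and> snd p \<le> bp_high b}"

definition red_wins :: "nat \<Rightarrow> point set \<Rightarrow> red_port set \<Rightarrow> (point \<Rightarrow> bool) \<Rightarrow> bool" where
  "red_wins k P RP col \<longleftrightarrow>
     (\<exists>q\<in>RP. \<exists>z. rp_start q < z \<and> z \<le> rp_end q \<and>
        card (red_set P q z) = k \<and> (\<forall>p\<in>red_set P q z. col p))"

definition blue_wins :: "nat \<Rightarrow> point set \<Rightarrow> blue_port set \<Rightarrow> (point \<Rightarrow> bool) \<Rightarrow> bool" where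
  "blue_wins l P BP col \<longleftrightarrow>
     (\<exists>b\<in>BP. card (blue_set P b) = l \<and> (\<forall>p\<in>blue_set P b. \<not> col p))"

definition forces :: "nat \<Rightarrow> nat \<Rightarrow> point set \<Rightarrow> red_port set \<Rightarrow> blue_port set \<Rightarrow> bool" where
  "forces k l P RP BP \<longleftrightarrow> (\<forall>col. red_wins k P RP col \<or> blue_wins l P BP col)"

text \<open>A red port q offers the bottomless rectangles with x-range (rp_start q, z] for
  z \<le> rp_end q; their tops can be placed in the band between rp_low q and rp_high q, which
  contains no point over the whole x-range of the port. A blue port is a horizontal strip.\<close>
locale gadget =
  fixes x0 x1 y0 y1 :: real and P :: "point set" and RP :: "red_port set" and BP :: "blue_port set"
  assumes finite_points: "finite P" and finite_red: "finite RP" and finite_blue: "finite BP"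
    and inj_fst: "inj_on fst P" and inj_snd: "inj_on snd P"
    and point_in_box: "p \<in> P \<Longrightarrow> x0 < fst p \<and> fst p < x1 \<and> y0 < snd p \<and> snd p < y1"
    and red_in_box: "q \<in> RP \<Longrightarrow>
      x0 < rp_start q \<and> rp_start q < rp_end q \<and> rp_end q < x1 \<and>
      y0 < rp_low q \<and> rp_low q < rp_high q \<and> rp_high q < y1"
    and blue_in_box: "b \<in> BP \<Longrightarrow> y0 < bp_low b \<and> bp_low b \<le> bp_high b \<and> bp_high b < y1"
    and band_empty: "q \<in> RP \<Longrightarrow> p \<in> P \<Longrightarrow> rp_start q < fst p \<Longrightarrow> fst p \<le> rp_end q \<Longrightarrow>
      snd p < rp_low q \<or> rp_high q < snd p"
    and red_nested: "q \<in> RP \<Longrightarrow> q' \<in> RP \<Longrightarrow> rp_start q < rp_start q' \<Longrightarrow> rp_start q' < rp_end q \<Longrightarrow>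
      rp_high q \<le> rp_low q'"
    and red_distinct: "q \<in> RP \<Longrightarrow> q' \<in> RP \<Longrightarrow> q \<noteq> q' \<Longrightarrow>
      rp_start q \<noteq> rp_start q' \<and> (rp_high q \<le> rp_low q' \<or> rp_high q' \<le> rp_low q)"
    and blue_disjoint: "b \<in> BP \<Longrightarrow> b' \<in> BP \<Longrightarrow> b \<noteq> b' \<Longrightarrow>
      bp_high b < bp_low b' \<or> bp_high b' < bp_low b"
    and blue_avoids_band: "q \<in> RP \<Longrightarrow> b \<in> BP \<Longrightarrow> rp_high q \<le> bp_low b \<or> bp_high b < rp_low q"

lemma gadget_one_red_port:
  assumes "x0 < x1" "y0 < y1"
  shows "gadget x0 x1 y0 y1 {}
    {RedPort (x0 + (x1 - x0) / 3) (y0 + (y1 - y0) / 3) (y0 + 2 * (y1 - y0) / 3)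
      (x0 + 2 * (x1 - x0) / 3)} {}"
  using assms by unfold_locales (auto simp: field_simps)

lemma forces_one_red_port:
  assumes "rp_start q < rp_end q"
  shows "forces 0 l {} {q} BP"
  using assms unfolding forces_def red_wins_def red_set_def by auto

lemma gadget_one_blue_port:
  assumes "y0 < y1"
  shows "gadget x0 x1 y0 y1 {} {} {BluePort ((y0 + y1) / 2) ((y0 + y1) / 2)}"
  using assms by unfold_locales auto

lemma forces_one_blue_port: "forces k 0 {} RP {b}"
  unfolding forces_def blue_wins_def blue_set_def by simp

definition separation :: "real set \<Rightarrow> real" where
  "separation S = (SOME d. 0 < d \<and> (\<forall>c\<in>S. \<forall>c'\<in>S. c < c' \<longrightarrow> c + d \<le> c'))"

lemma finite_separation_exists:
  fixes S :: "real set"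
  assumes "finite S"
  shows "\<exists>d>0. \<forall>c\<in>S. \<forall>c'\<in>S. c < c' \<longrightarrow> c + d \<le> c'"
proof -
  define D where "D = insert 1 ((\<lambda>(c, c'). c' - c) ` {(c, c') \<in> S \<times> S. c < c'})"
  have "finite {(c, c') \<in> S \<times> S. c < c'}"
    using assms by (auto intro: finite_subset[of _ "S \<times> S"])
  then have "finite D" unfolding D_def by simp
  moreover have "D \<noteq> {}" "\<forall>d\<in>D. 0 < d" unfolding D_def by auto
  ultimately have "0 < Min D" by simp
  moreover have "c + Min D \<le> c'" if "c \<in> S" "c' \<in> S" "c < c'" for c c'
  proof -
    have "c' - c \<in> D" unfolding D_def using that by force
    then show ?thesis using Min_le[OF \<open>finite D\<close>] by fastforce
  qed
  ultimately show ?thesis by blast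
qed

lemma
  assumes "finite S"
  shows separation_pos: "0 < separation S"
    and separation_le: "c \<in> S \<Longrightarrow> c' \<in> S \<Longrightarrow> c < c' \<Longrightarrow> c + separation S \<le> c'"
  using someI_ex[OF finite_separation_exists[OF assms]] unfolding separation_def by auto

section \<open>Merging gadgets\<close>

locale gadget_split =
  X: gadget x0 "(x0 + x1) / 2" y0 y1 PX RX BX
  for x0 x1 y0 y1 :: real and PX :: "point set" and RX :: "red_port set" and BX :: "blue_port set" +
  assumes x0_less_x1: "x0 < x1"
begin

abbreviation xm :: real where "xm \<equiv> (x0 + x1) / 2"

definition X_heights :: "real set" where
  "X_heights = snd ` PX \<union> rp_low ` RX \<union> rp_high ` RX"

definition X_abscissae :: "real set" where
  "X_abscissae = fst ` PX \<union> rp_start ` RX \<union> rp_end ` RX \<union> {xm}"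

definition band_sep :: real where "band_sep = separation X_heights"

definition slot_width :: real where "slot_width = separation X_abscissae / 2"

text \<open>The inner band of q is the middle third of the gap above rp_low q; it lies inside the
  empty band of q and at distance band_sep / 3 from every height of the left gadget.\<close>
definition inner_low :: "red_port \<Rightarrow> real" where "inner_low q = rp_low q + band_sep / 3"

definition inner_high :: "red_port \<Rightarrow> real" where "inner_high q = rp_low q + 2 * band_sep / 3"

definition slot :: "red_port \<Rightarrow> real" where "slot q = xm + rp_start q - x0"

lemma finite_X_heights: "finite X_heights"
  unfolding X_heights_def using X.finite_points X.finite_red by simp

lemma finite_X_abscissae: "finite X_abscissae"
  unfolding X_abscissae_def using X.finite_points X.finite_red by simp

lemma band_sep_pos: "0 < band_sep"
  unfolding band_sep_def using separation_pos[OF finite_X_heights] .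

lemma slot_width_pos: "0 < slot_width"
  unfolding slot_width_def using separation_pos[OF finite_X_abscissae] by simp

lemma band_sep_le: "c \<in> X_heights \<Longrightarrow> c' \<in> X_heights \<Longrightarrow> c < c' \<Longrightarrow> c + band_sep \<le> c'"
  unfolding band_sep_def using separation_le[OF finite_X_heights] .

lemma slot_width_le: "c \<in> X_abscissae \<Longrightarrow> c' \<in> X_abscissae \<Longrightarrow> c < c' \<Longrightarrow> c + 2 * slot_width \<le> c'"
  unfolding slot_width_def using separation_le[OF finite_X_abscissae] by simp

lemma inner_band:
  assumes "q \<in> RX"
  shows "rp_low q < inner_low q" "inner_low q < inner_high q" "inner_high q < rp_high q"
proof -
  have "rp_low q + band_sep \<le> rp_high q"
    using band_sep_le X.red_in_box[OF assms] assms unfolding X_heights_def by auto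
  then show "rp_low q < inner_low q" "inner_low q < inner_high q" "inner_high q < rp_high q"
    using band_sep_pos unfolding inner_low_def inner_high_def by auto
qed

lemma X_point_outside_inner:
  assumes "p \<in> PX" "q \<in> RX"
  shows "snd p < inner_low q \<or> inner_high q < snd p"
proof (cases "snd p \<le> rp_low q")
  case True
  then show ?thesis using inner_band[OF assms(2)] by auto
next
  case False
  then have "rp_low q + band_sep \<le> snd p"
    using band_sep_le assms unfolding X_heights_def by auto
  then show ?thesis using band_sep_pos unfolding inner_high_def by auto
qed

lemma inner_disjoint:
  assumes "q \<in> RX" "q' \<in> RX" "q \<noteq> q'"
  shows "inner_high q < inner_low q' \<or> inner_high q' < inner_low q"
  using X.red_distinct[OF assms] inner_band[OF assms(1)] inner_band[OF assms(2)] by auto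

lemma inner_unique:
  assumes "q \<in> RX" "q' \<in> RX" "inner_low q < y" "y < inner_high q" "inner_low q' < y"
    "y < inner_high q'"
  shows "q = q'"
  using inner_disjoint[OF assms(1,2)] assms(3-6) by fastforce

lemma start_sep_xm: "q \<in> RX \<Longrightarrow> rp_start q + 2 * slot_width \<le> xm"
  using slot_width_le[of "rp_start q" xm] X.red_in_box[of q] unfolding X_abscissae_def by auto

lemma start_sep_end: "q \<in> RX \<Longrightarrow> rp_start q + 2 * slot_width \<le> rp_end q"
  using slot_width_le[of "rp_start q" "rp_end q"] X.red_in_box[of q] unfolding X_abscissae_def
    by auto

lemma start_sep_point:
  "q \<in> RX \<Longrightarrow> p \<in> PX \<Longrightarrow> rp_start q < fst p \<Longrightarrow> rp_start q + 2 * slot_width \<le> fst p"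
  using slot_width_le[of "rp_start q" "fst p"] unfolding X_abscissae_def by auto

lemma start_sep_start:
  "q \<in> RX \<Longrightarrow> q' \<in> RX \<Longrightarrow> rp_start q < rp_start q' \<Longrightarrow> rp_start q + 2 * slot_width \<le> rp_start q'"
  using slot_width_le[of "rp_start q" "rp_start q'"] unfolding X_abscissae_def by auto

lemma slot_in_right_half:
  assumes "q \<in> RX"
  shows "xm < slot q" "slot q + slot_width < x1"
  using X.red_in_box[OF assms] start_sep_xm[OF assms] slot_width_pos unfolding slot_def
  by (auto simp: field_simps)

lemma slot_disjoint:
  assumes "q \<in> RX" "q' \<in> RX" "q \<noteq> q'"
  shows "slot q + slot_width < slot q' \<or> slot q' + slot_width < slot q"
proof -
  have "rp_start q < rp_start q' \<or> rp_start q' < rp_start q"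
    using X.red_distinct[OF assms] by auto
  then show ?thesis
    using start_sep_start[OF assms(1,2)] start_sep_start[OF assms(2,1)] slot_width_pos
    unfolding slot_def by auto
qed

end

locale gadget_merge = gadget_split +
  fixes PY :: "red_port \<Rightarrow> point set" and RY :: "red_port \<Rightarrow> red_port set"
    and BY :: "red_port \<Rightarrow> blue_port set"
  assumes Y_gadget: "q \<in> RX \<Longrightarrow>
    gadget (slot q) (slot q + slot_width) (inner_low q) (inner_high q) (PY q) (RY q) (BY q)"
begin

definition Y_heights :: "red_port \<Rightarrow> real set" where
  "Y_heights q = snd ` PY q \<union> bp_low ` BY q \<union> bp_high ` BY q \<union> rp_low ` RY q \<union> rp_high ` RY q
     \<union> {inner_high q}"

definition ygap :: "red_port \<Rightarrow> real" where "ygap q = separation (Y_heights q) / 2"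

definition inner_pos :: "red_port \<Rightarrow> real \<Rightarrow> real" where
  "inner_pos q y = (y - inner_low q) / (inner_high q - inner_low q)"

text \<open>Every blue port b of the copy in the inner band of q gets a new point just above it. Its
  abscissa lies in the first slot_width of the x-range of q and increases with the height of b,
  so the new red port of b, which starts just left of it, misses the new points of lower ports.\<close>
definition new_point :: "red_port \<Rightarrow> blue_port \<Rightarrow> point" where
  "new_point q b = (rp_start q + slot_width * inner_pos q (bp_high b + ygap q), bp_high b + ygap q)"

definition new_blue :: "red_port \<Rightarrow> blue_port \<Rightarrow> blue_port" where
  "new_blue q b = BluePort (bp_low b) (bp_high b + ygap q)"

text \<open>The band of the new red port lies between the new point and the next height of the
  copy, where no other point lies (lemma window_point below).\<close>
definition new_red :: "red_port \<Rightarrow> blue_port \<Rightarrow> red_port" where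
  "new_red q b = RedPort (rp_start q + slot_width * inner_pos q (bp_high b))
     (bp_high b + 4 * ygap q / 3) (bp_high b + 5 * ygap q / 3) (rp_end q)"

definition points :: "point set" where
  "points = PX \<union> (\<Union>q\<in>RX. PY q) \<union> {new_point q b | q b. q \<in> RX \<and> b \<in> BY q}"

definition red_ports :: "red_port set" where
  "red_ports = (\<Union>q\<in>RX. RY q) \<union> {new_red q b | q b. q \<in> RX \<and> b \<in> BY q}"

definition blue_ports :: "blue_port set" where
  "blue_ports = BX \<union> {new_blue q b | q b. q \<in> RX \<and> b \<in> BY q}"

context
  fixes q assumes q: "q \<in> RX"
begin

lemma finite_Y_heights: "finite (Y_heights q)"
  unfolding Y_heights_def using gadget.finite_points[OF Y_gadget[OF q]]
    gadget.finite_red[OF Y_gadget[OF q]] gadget.finite_blue[OF Y_gadget[OF q]] by simp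

lemma ygap_pos: "0 < ygap q"
  unfolding ygap_def using separation_pos[OF finite_Y_heights] by simp

lemma ygap_le: "c \<in> Y_heights q \<Longrightarrow> c' \<in> Y_heights q \<Longrightarrow> c < c' \<Longrightarrow> c + 2 * ygap q \<le> c'"
  unfolding ygap_def using separation_le[OF finite_Y_heights] by simp

lemma blue_high_below_inner_high: "b \<in> BY q \<Longrightarrow> bp_high b + 2 * ygap q \<le> inner_high q"
  using ygap_le[of "bp_high b" "inner_high q"] gadget.blue_in_box[OF Y_gadget[OF q]]
  unfolding Y_heights_def by auto

lemma blue_high_sep:
  assumes "b \<in> BY q" "b' \<in> BY q" "b \<noteq> b'"
  shows "bp_high b + 2 * ygap q \<le> bp_high b' \<or> bp_high b' + 2 * ygap q \<le> bp_high b"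
proof -
  have "bp_high b \<noteq> bp_high b'"
    using gadget.blue_disjoint[OF Y_gadget[OF q] assms] gadget.blue_in_box[OF Y_gadget[OF q]]
      assms(1,2)
    by fastforce
  then show ?thesis
    using ygap_le[of "bp_high b" "bp_high b'"] ygap_le[of "bp_high b'" "bp_high b"] assms(1,2)
    unfolding Y_heights_def by fastforce
qed

lemma inner_pos_less_iff: "inner_pos q y < inner_pos q y' \<longleftrightarrow> y < y'"
  using inner_band[OF q] unfolding inner_pos_def by (auto simp: divide_less_cancel)

lemma inner_pos_between:
  "inner_low q < y \<Longrightarrow> y < inner_high q \<Longrightarrow> 0 < inner_pos q y \<and> inner_pos q y < 1"
  using inner_band[OF q] unfolding inner_pos_def by (auto simp: field_simps)

lemma inner_pos_eq_iff: "inner_pos q y = inner_pos q y' \<longleftrightarrow> y = y'"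
  using inner_pos_less_iff by (metis not_less_iff_gr_or_eq)

lemma Y_blue_in_inner:
  "b \<in> BY q \<Longrightarrow> inner_low q < bp_low b \<and> bp_low b \<le> bp_high b \<and> bp_high b < inner_high q"
  using gadget.blue_in_box[OF Y_gadget[OF q]] .

lemma new_point_fst:
  assumes "b \<in> BY q"
  shows "rp_start q < fst (new_point q b) \<and> fst (new_point q b) < rp_start q + slot_width"
proof -
  have "0 < inner_pos q (bp_high b + ygap q) \<and> inner_pos q (bp_high b + ygap q) < 1"
    using inner_pos_between Y_blue_in_inner[OF assms] blue_high_below_inner_high[OF assms] ygap_pos
    by auto
  then show ?thesis using slot_width_pos unfolding new_point_def by simp
qed

lemma new_point_in_inner:
  "b \<in> BY q \<Longrightarrow> inner_low q < snd (new_point q b) \<and> snd (new_point q b) < inner_high q"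
  using Y_blue_in_inner blue_high_below_inner_high ygap_pos unfolding new_point_def by fastforce

lemma new_red_start:
  assumes "b \<in> BY q"
  shows "rp_start q < rp_start (new_red q b) \<and> rp_start (new_red q b) < fst (new_point q b)"
proof -
  have "0 < inner_pos q (bp_high b)" using inner_pos_between Y_blue_in_inner[OF assms] by auto
  moreover have "inner_pos q (bp_high b) < inner_pos q (bp_high b + ygap q)"
    using inner_pos_less_iff ygap_pos by simp
  ultimately show ?thesis using slot_width_pos unfolding new_red_def new_point_def by simp
qed

lemma Y_red_in_slot:
  "r \<in> RY q \<Longrightarrow> slot q < rp_start r \<and> rp_start r < rp_end r \<and> rp_end r < slot q + slot_width \<and>
    inner_low q < rp_low r \<and> rp_low r < rp_high r \<and> rp_high r < inner_high q"
  using gadget.red_in_box[OF Y_gadget[OF q]] by fastforce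

lemma new_red_in_inner:
  "b \<in> BY q \<Longrightarrow> inner_low q < rp_low (new_red q b) \<and> rp_high (new_red q b) < inner_high q"
  using Y_blue_in_inner blue_high_below_inner_high ygap_pos unfolding new_red_def by fastforce

lemma new_blue_in_inner:
  "b \<in> BY q \<Longrightarrow> inner_low q < bp_low (new_blue q b) \<and> bp_high (new_blue q b) < inner_high q"
  using Y_blue_in_inner blue_high_below_inner_high ygap_pos unfolding new_blue_def by fastforce

end

lemma new_port_simps [simp]:
  "snd (new_point q b) = bp_high b + ygap q"
  "rp_low (new_red q b) = bp_high b + 4 * ygap q / 3"
  "rp_high (new_red q b) = bp_high b + 5 * ygap q / 3"
  "rp_end (new_red q b) = rp_end q"
  "bp_low (new_blue q b) = bp_low b"
  "bp_high (new_blue q b) = bp_high b + ygap q"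
  unfolding new_point_def new_red_def new_blue_def by simp_all

lemma points_cases:
  assumes "p \<in> points"
  obtains (X) "p \<in> PX" | (Y) q where "q \<in> RX" "p \<in> PY q"
    | (new) q b where "q \<in> RX" "b \<in> BY q" "p = new_point q b"
  using assms unfolding points_def by auto

lemma red_ports_cases:
  assumes "r \<in> red_ports"
  obtains (Y) q where "q \<in> RX" "r \<in> RY q" | (new) q b where "q \<in> RX" "b \<in> BY q" "r = new_red q b"
  using assms unfolding red_ports_def by auto

lemma blue_ports_cases:
  assumes "b \<in> blue_ports"
  obtains (X) "b \<in> BX" | (new) q g where "q \<in> RX" "g \<in> BY q" "b = new_blue q g"
  using assms unfolding blue_ports_def by auto

lemma X_points_subset: "PX \<subseteq> points"
  unfolding points_def by blast

lemma Y_points_subset: "q \<in> RX \<Longrightarrow> PY q \<subseteq> points"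
  unfolding points_def by blast

lemma new_point_in_points: "q \<in> RX \<Longrightarrow> b \<in> BY q \<Longrightarrow> new_point q b \<in> points"
  unfolding points_def by blast

lemma Y_red_subset: "q \<in> RX \<Longrightarrow> RY q \<subseteq> red_ports"
  unfolding red_ports_def by blast

lemma new_red_in_red_ports: "q \<in> RX \<Longrightarrow> b \<in> BY q \<Longrightarrow> new_red q b \<in> red_ports"
  unfolding red_ports_def by blast

lemma X_blue_subset: "BX \<subseteq> blue_ports"
  unfolding blue_ports_def by blast

lemma new_blue_in_blue_ports: "q \<in> RX \<Longrightarrow> b \<in> BY q \<Longrightarrow> new_blue q b \<in> blue_ports"
  unfolding blue_ports_def by blast

lemma point_in_slot:
  assumes "q \<in> RX" "p \<in> points" "slot q < fst p" "fst p < slot q + slot_width"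
  shows "p \<in> PY q"
  using assms(2)
proof (cases rule: points_cases)
  case X
  then show ?thesis using X.point_in_box slot_in_right_half[OF assms(1)] assms(3) by fastforce
next
  case (Y q')
  then show ?thesis
    using slot_disjoint[OF Y(1) assms(1)] gadget.point_in_box[OF Y_gadget[OF Y(1)] Y(2)] assms(3,4)
    by (cases "q' = q") auto
next
  case (new q' b)
  then show ?thesis
    using new_point_fst[OF new(1,2)] start_sep_xm[OF new(1)] slot_in_right_half[OF assms(1)]
      assms(3)
    by auto
qed

lemma point_in_inner:
  assumes "q \<in> RX" "p \<in> points" "inner_low q < snd p" "snd p < inner_high q"
  shows "p \<in> PY q \<or> (\<exists>b\<in>BY q. p = new_point q b)"
  using assms(2)
proof (cases rule: points_cases)
  case X
  then show ?thesis using X_point_outside_inner[OF X assms(1)] assms(3,4) by auto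
next
  case (Y q')
  then have "q' = q"
    using inner_unique[OF Y(1) assms(1)] gadget.point_in_box[OF Y_gadget[OF Y(1)] Y(2)] assms(3,4)
    by auto
  then show ?thesis using Y by simp
next
  case (new q' b)
  then have "q' = q"
    using inner_unique[OF new(1) assms(1)] new_point_in_inner[OF new(1,2)] assms(3,4) by auto
  then show ?thesis using new by blast
qed

lemma new_points_in_inner:
  assumes "p \<in> points" "p \<notin> PX"
  obtains q where "q \<in> RX" "inner_low q < snd p" "snd p < inner_high q"
  using assms(1)
proof (cases rule: points_cases)
  case X
  then show ?thesis using assms(2) by simp
next
  case (Y q)
  then show ?thesis using that gadget.point_in_box[OF Y_gadget] by blast
next
  case (new q b)
  then show ?thesis using that new_point_in_inner by blast
qed

lemma window_point:
  assumes q: "q \<in> RX" and b: "b \<in> BY q" and p: "p \<in> points"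
    and window: "bp_high b < snd p" "snd p < bp_high b + 2 * ygap q"
  shows "p = new_point q b"
proof -
  have "inner_low q < snd p" "snd p < inner_high q"
    using window Y_blue_in_inner[OF q b] blue_high_below_inner_high[OF q b] by auto
  then consider "p \<in> PY q" | b' where "b' \<in> BY q" "p = new_point q b'"
    using point_in_inner[OF q p] by blast
  then show ?thesis
  proof cases
    case 1
    then have "snd p \<in> Y_heights q" "bp_high b \<in> Y_heights q" using b unfolding Y_heights_def
      by auto
    then show ?thesis using ygap_le[OF q] window by fastforce
  next
    case 2
    then show ?thesis using blue_high_sep[OF q b 2(1)] window ygap_pos[OF q] by force
  qed
qed

lemma finite_merged: "finite points" "finite red_ports" "finite blue_ports"
proof -
  have fin: "finite {f q b | q b. q \<in> RX \<and> b \<in> BY q}" for f :: "red_port \<Rightarrow> blue_port \<Rightarrow> 'a"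
  proof -
    have "{f q b | q b. q \<in> RX \<and> b \<in> BY q} = (\<lambda>(q, b). f q b) ` Sigma RX BY" by auto
    then show ?thesis using X.finite_red gadget.finite_blue[OF Y_gadget] by auto
  qed
  show "finite points" "finite red_ports" "finite blue_ports"
    unfolding points_def red_ports_def blue_ports_def
    using fin X.finite_points X.finite_red X.finite_blue
      gadget.finite_points[OF Y_gadget] gadget.finite_red[OF Y_gadget] by auto
qed

lemma fst_eq_Y_point:
  assumes "q \<in> RX" "p \<in> PY q" "p' \<in> points" "fst p' = fst p"
  shows "p' = p"
proof -
  have "p' \<in> PY q"
    using point_in_slot[OF assms(1,3)] gadget.point_in_box[OF Y_gadget[OF assms(1)] assms(2)]
      assms(4)
    by simp
  then show ?thesis using gadget.inj_fst[OF Y_gadget[OF assms(1)]] assms(2,4)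
    by (auto dest: inj_onD)
qed

lemma fst_eq_new_point:
  assumes q: "q \<in> RX" and b: "b \<in> BY q" and p': "p' \<in> points" and eq: "fst p' = fst (new_point q b)"
  shows "p' = new_point q b"
  using p'
proof (cases rule: points_cases)
  case X
  then show ?thesis using start_sep_point[OF q X] new_point_fst[OF q b] eq slot_width_pos by force
next
  case (Y q')
  then show ?thesis
    using gadget.point_in_box[OF Y_gadget[OF Y(1)] Y(2)] slot_in_right_half[OF Y(1)]
      new_point_fst[OF q b] start_sep_xm[OF q] eq by auto
next
  case (new q' b')
  have "q' = q"
  proof (rule ccontr)
    assume "q' \<noteq> q"
    then have "rp_start q' < rp_start q \<or> rp_start q < rp_start q'"
      using X.red_distinct[OF new(1) q] by auto
    then show False
      using start_sep_start[OF q new(1)] start_sep_start[OF new(1) q] new_point_fst[OF q b]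
        new_point_fst[OF new(1,2)] eq new(3) by auto
  qed
  then have "inner_pos q (bp_high b' + ygap q) = inner_pos q (bp_high b + ygap q)"
    using eq new(3) slot_width_pos unfolding new_point_def by simp
  then have "bp_high b' = bp_high b" using inner_pos_eq_iff[OF q] by simp
  then have "b' = b" using blue_high_sep[OF q _ b] new(2) \<open>q' = q\<close> ygap_pos[OF q] by fastforce
  then show ?thesis using new \<open>q' = q\<close> by simp
qed

lemma fst_eq_X_point:
  assumes p: "p \<in> PX" and p': "p' \<in> points" and eq: "fst p' = fst p"
  shows "p' = p"
  using p'
proof (cases rule: points_cases)
  case X
  then show ?thesis using X.inj_fst p eq by (auto dest: inj_onD)
next
  case (Y q)
  then show ?thesis
    using gadget.point_in_box[OF Y_gadget[OF Y(1)] Y(2)] slot_in_right_half[OF Y(1)]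
      X.point_in_box[OF p] eq
    by auto
next
  case (new q b)
  then show ?thesis using fst_eq_new_point[OF new(1,2) X_points_subset[THEN subsetD, OF p]] eq
    by simp
qed

lemma inj_fst_merged: "inj_on fst points"
proof (rule inj_onI)
  fix p p' assume "p \<in> points" "p' \<in> points" "fst p = fst p'"
  then show "p = p'"
    by (cases rule: points_cases) (auto dest: fst_eq_X_point fst_eq_Y_point fst_eq_new_point)
qed

lemma snd_eq_new_point:
  assumes "q \<in> RX" "b \<in> BY q" "p' \<in> points" "snd p' = snd (new_point q b)"
  shows "p' = new_point q b"
  using window_point[OF assms(1-3)] assms(4) ygap_pos[OF assms(1)] by simp

lemma snd_eq_Y_point:
  assumes q: "q \<in> RX" and p: "p \<in> PY q" and p': "p' \<in> points" and eq: "snd p' = snd p"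
  shows "p' = p"
proof -
  have "inner_low q < snd p'" "snd p' < inner_high q"
    using gadget.point_in_box[OF Y_gadget[OF q] p] eq by auto
  then consider "p' \<in> PY q" | b where "b \<in> BY q" "p' = new_point q b"
    using point_in_inner[OF q p'] by blast
  then show ?thesis
  proof cases
    case 1
    then show ?thesis using gadget.inj_snd[OF Y_gadget[OF q]] p eq by (auto dest: inj_onD)
  next
    case 2
    then show ?thesis using snd_eq_new_point[OF q 2(1) Y_points_subset[THEN subsetD, OF q p]] eq
      by simp
  qed
qed

lemma snd_eq_X_point:
  assumes p: "p \<in> PX" and p': "p' \<in> points" and eq: "snd p' = snd p"
  shows "p' = p"
proof (cases "p' \<in> PX")
  case True
  then show ?thesis using X.inj_snd p eq by (auto dest: inj_onD)
next
  case False
  then obtain q where "q \<in> RX" "inner_low q < snd p'" "snd p' < inner_high q"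
    using new_points_in_inner[OF p'] by blast
  then show ?thesis using X_point_outside_inner[OF p] eq by force
qed

lemma inj_snd_merged: "inj_on snd points"
proof (rule inj_onI)
  fix p p' assume "p \<in> points" "p' \<in> points" "snd p = snd p'"
  then show "p = p'"
    by (cases rule: points_cases) (auto dest: snd_eq_X_point snd_eq_Y_point snd_eq_new_point)
qed

lemma point_in_box_merged:
  assumes "p \<in> points"
  shows "x0 < fst p \<and> fst p < x1 \<and> y0 < snd p \<and> snd p < y1"
  using assms
proof (cases rule: points_cases)
  case X
  then show ?thesis using X.point_in_box x0_less_x1 by fastforce
next
  case (Y q)
  then show ?thesis
    using gadget.point_in_box[OF Y_gadget[OF Y(1)] Y(2)] slot_in_right_half[OF Y(1)] x0_less_x1
      inner_band[OF Y(1)] X.red_in_box[OF Y(1)] by fastforce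
next
  case (new q b)
  then show ?thesis
    using new_point_fst[OF new(1,2)] new_point_in_inner[OF new(1,2)] start_sep_xm[OF new(1)]
      inner_band[OF new(1)] X.red_in_box[OF new(1)] slot_width_pos x0_less_x1 by fastforce
qed

lemma red_in_box_merged:
  assumes "r \<in> red_ports"
  shows "x0 < rp_start r \<and> rp_start r < rp_end r \<and> rp_end r < x1 \<and>
    y0 < rp_low r \<and> rp_low r < rp_high r \<and> rp_high r < y1"
  using assms
proof (cases rule: red_ports_cases)
  case (Y q)
  then show ?thesis
    using gadget.red_in_box[OF Y_gadget[OF Y(1)] Y(2)] slot_in_right_half[OF Y(1)] x0_less_x1
      inner_band[OF Y(1)] X.red_in_box[OF Y(1)] by fastforce
next
  case (new q b)
  then show ?thesis
    using new_red_start[OF new(1,2)] new_point_fst[OF new(1,2)] start_sep_end[OF new(1)]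
      Y_blue_in_inner[OF new(1,2)] blue_high_below_inner_high[OF new(1,2)] ygap_pos[OF new(1)]
      inner_band[OF new(1)] X.red_in_box[OF new(1)] slot_width_pos x0_less_x1 by fastforce
qed

lemma blue_in_box_merged:
  assumes "b \<in> blue_ports"
  shows "y0 < bp_low b \<and> bp_low b \<le> bp_high b \<and> bp_high b < y1"
  using assms
proof (cases rule: blue_ports_cases)
  case X
  then show ?thesis using X.blue_in_box by blast
next
  case (new q g)
  then show ?thesis
    using Y_blue_in_inner[OF new(1,2)] blue_high_below_inner_high[OF new(1,2)] ygap_pos[OF new(1)]
      inner_band[OF new(1)] X.red_in_box[OF new(1)] by fastforce
qed

lemma band_empty_merged:
  assumes r: "r \<in> red_ports" and p: "p \<in> points" and x: "rp_start r < fst p" "fst p \<le> rp_end r"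
  shows "snd p < rp_low r \<or> rp_high r < snd p"
  using r
proof (cases rule: red_ports_cases)
  case (Y q)
  then have "p \<in> PY q"
    using point_in_slot[OF Y(1) p] gadget.red_in_box[OF Y_gadget[OF Y(1)] Y(2)] x by fastforce
  then show ?thesis using gadget.band_empty[OF Y_gadget[OF Y(1)] Y(2)] x by blast
next
  case (new q b)
  show ?thesis
  proof (rule ccontr)
    assume "\<not> ?thesis"
    then have "bp_high b < snd p" "snd p < bp_high b + 2 * ygap q" "bp_high b + ygap q < snd p"
      using new(3) ygap_pos[OF new(1)] by auto
    then show False using window_point[OF new(1,2) p] by auto
  qed
qed

lemma start_less_if_near:
  assumes "q \<in> RX" "q' \<in> RX" "q \<noteq> q'"
    and "rp_start q < x" "x < x'" "x' < rp_start q' + slot_width"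
  shows "rp_start q < rp_start q'"
proof (rule ccontr)
  assume "\<not> rp_start q < rp_start q'"
  then have "rp_start q' < rp_start q" using X.red_distinct[OF assms(1-3)] by auto
  then show False using start_sep_start[OF assms(2,1)] assms(4-6) slot_width_pos by auto
qed

lemma new_red_nested:
  assumes q: "q \<in> RX" "b \<in> BY q" and q': "q' \<in> RX" "b' \<in> BY q'"
    and x: "rp_start (new_red q b) < rp_start (new_red q' b')" "rp_start (new_red q' b') < rp_end q"
  shows "rp_high (new_red q b) \<le> rp_low (new_red q' b')"
proof (cases "q' = q")
  case True
  then have "bp_high b < bp_high b'"
    using x(1) inner_pos_less_iff[OF q(1)] slot_width_pos unfolding new_red_def by simp
  then have "bp_high b + 2 * ygap q \<le> bp_high b'"
    using blue_high_sep[OF q] q'(2) True by fastforce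
  then show ?thesis using True ygap_pos[OF q(1)] by simp
next
  case False
  have "rp_start q < rp_start q'"
    using start_less_if_near[OF q(1) q'(1) False[symmetric]] new_red_start[OF q]
      new_red_start[OF q'] new_point_fst[OF q'] x(1) by auto
  moreover have "rp_start q' < rp_end q" using new_red_start[OF q'] x(2) by auto
  ultimately have "rp_high q \<le> rp_low q'" using X.red_nested[OF q(1) q'(1)] by blast
  then show ?thesis
    using new_red_in_inner[OF q] new_red_in_inner[OF q'] inner_band[OF q(1)] inner_band[OF q'(1)]
    by fastforce
qed

lemma red_nested_merged:
  assumes r: "r \<in> red_ports" and r': "r' \<in> red_ports"
    and x: "rp_start r < rp_start r'" "rp_start r' < rp_end r"
  shows "rp_high r \<le> rp_low r'"
  using r
proof (cases rule: red_ports_cases)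
  case (Y q)
  show ?thesis using r'
  proof (cases rule: red_ports_cases)
    case Y': (Y q')
    then show ?thesis
      using gadget.red_nested[OF Y_gadget[OF Y(1)] Y(2)] slot_disjoint[OF Y(1) Y'(1)]
        Y_red_in_slot[OF Y] Y_red_in_slot[OF Y'] x by (cases "q = q'") auto
  next
    case (new q' b')
    then show ?thesis
      using Y_red_in_slot[OF Y] slot_in_right_half[OF Y(1)] new_red_start[OF new(1,2)]
        new_point_fst[OF new(1,2)] start_sep_xm[OF new(1)] x by auto
  qed
next
  case (new q b)
  show ?thesis using r'
  proof (cases rule: red_ports_cases)
    case (Y q')
    then show ?thesis
      using Y_red_in_slot[OF Y] slot_in_right_half[OF Y(1)] new(3) start_sep_end[OF new(1)]
        start_sep_xm[OF new(1)] X.red_in_box[OF new(1)] x by auto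
  next
    case new': (new q' b')
    then show ?thesis using new_red_nested[OF new(1,2) new'(1,2)] new(3) x by simp
  qed
qed

lemma new_red_Y_red_distinct:
  assumes q: "q \<in> RX" and b: "b \<in> BY q" and q': "q' \<in> RX" and r: "r \<in> RY q'"
  shows "rp_start (new_red q b) \<noteq> rp_start r \<and>
    (rp_high (new_red q b) \<le> rp_low r \<or> rp_high r \<le> rp_low (new_red q b))"
proof
  show "rp_start (new_red q b) \<noteq> rp_start r"
    using Y_red_in_slot[OF q' r] slot_in_right_half[OF q'] new_red_start[OF q b]
      new_point_fst[OF q b] start_sep_xm[OF q] by auto
  show "rp_high (new_red q b) \<le> rp_low r \<or> rp_high r \<le> rp_low (new_red q b)"
  proof (cases "q' = q")
    case True
    have "rp_high r \<le> bp_low b \<or> bp_high b < rp_low r"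
      using gadget.blue_avoids_band[OF Y_gadget[OF q]] r b True by blast
    moreover have "bp_high b < rp_low r \<Longrightarrow> bp_high b + 2 * ygap q \<le> rp_low r"
      using ygap_le[OF q] b r True unfolding Y_heights_def by blast
    ultimately show ?thesis using Y_blue_in_inner[OF q b] ygap_pos[OF q] by auto
  next
    case False
    then show ?thesis
      using inner_disjoint[OF q q'] new_red_in_inner[OF q b] Y_red_in_slot[OF q' r] by fastforce
  qed
qed

lemma new_red_distinct:
  assumes q: "q \<in> RX" "b \<in> BY q" and q': "q' \<in> RX" "b' \<in> BY q'"
    and ne: "new_red q b \<noteq> new_red q' b'"
  shows "rp_start (new_red q b) \<noteq> rp_start (new_red q' b') \<and>
    (rp_high (new_red q b) \<le> rp_low (new_red q' b') \<or>
     rp_high (new_red q' b') \<le> rp_low (new_red q b))"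
proof (cases "q' = q")
  case True
  then have "b' \<noteq> b" using ne by blast
  then have "bp_high b + 2 * ygap q \<le> bp_high b' \<or> bp_high b' + 2 * ygap q \<le> bp_high b"
    using blue_high_sep[OF q] q'(2) True by blast
  moreover from this have "inner_pos q (bp_high b) \<noteq> inner_pos q (bp_high b')"
    using inner_pos_eq_iff[OF q(1)] ygap_pos[OF q(1)] by auto
  ultimately show ?thesis
    using True ygap_pos[OF q(1)] slot_width_pos unfolding new_red_def by auto
next
  case False
  have "rp_start q + 2 * slot_width \<le> rp_start q' \<or> rp_start q' + 2 * slot_width \<le> rp_start q"
    using X.red_distinct[OF q(1) q'(1)] False start_sep_start[OF q(1) q'(1)]
      start_sep_start[OF q'(1) q(1)]
    by fastforce
  then show ?thesis
    using new_red_start[OF q] new_red_start[OF q'] new_point_fst[OF q] new_point_fst[OF q']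
      inner_disjoint[OF q(1) q'(1)] False new_red_in_inner[OF q] new_red_in_inner[OF q']
    by fastforce
qed

lemma red_distinct_merged:
  assumes r: "r \<in> red_ports" and r': "r' \<in> red_ports" and ne: "r \<noteq> r'"
  shows "rp_start r \<noteq> rp_start r' \<and> (rp_high r \<le> rp_low r' \<or> rp_high r' \<le> rp_low r)"
  using r
proof (cases rule: red_ports_cases)
  case (Y q)
  show ?thesis using r'
  proof (cases rule: red_ports_cases)
    case Y': (Y q')
    show ?thesis
    proof (cases "q = q'")
      case True
      then show ?thesis using gadget.red_distinct[OF Y_gadget[OF Y(1)] Y(2)] Y' ne by blast
    next
      case False
      then show ?thesis
        using slot_disjoint[OF Y(1) Y'(1)] inner_disjoint[OF Y(1) Y'(1)]
          Y_red_in_slot[OF Y] Y_red_in_slot[OF Y'] by fastforce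
    qed
  next
    case (new q' b')
    then show ?thesis using new_red_Y_red_distinct[OF new(1,2) Y] by auto
  qed
next
  case (new q b)
  show ?thesis using r'
  proof (cases rule: red_ports_cases)
    case (Y q')
    then show ?thesis using new_red_Y_red_distinct[OF new(1,2) Y] new(3) by auto
  next
    case new': (new q' b')
    then show ?thesis using new_red_distinct[OF new(1,2) new'(1,2)] new(3) ne by simp
  qed
qed

lemma X_blue_new_blue_disjoint:
  assumes "b \<in> BX" "q \<in> RX" "g \<in> BY q"
  shows "bp_high b < bp_low (new_blue q g) \<or> bp_high (new_blue q g) < bp_low b"
  using X.blue_avoids_band[OF assms(2,1)] new_blue_in_inner[OF assms(2,3)] inner_band[OF assms(2)]
  by fastforce

lemma blue_disjoint_merged:
  assumes b: "b \<in> blue_ports" and b': "b' \<in> blue_ports" and ne: "b \<noteq> b'"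
  shows "bp_high b < bp_low b' \<or> bp_high b' < bp_low b"
  using b
proof (cases rule: blue_ports_cases)
  case X
  show ?thesis using b'
  proof (cases rule: blue_ports_cases)
    case X': X
    show ?thesis by (rule X.blue_disjoint[OF X X' ne])
  next
    case (new q g)
    then show ?thesis using X_blue_new_blue_disjoint[OF X new(1,2)] by auto
  qed
next
  case (new q g)
  show ?thesis using b'
  proof (cases rule: blue_ports_cases)
    case X
    then show ?thesis using X_blue_new_blue_disjoint[OF X new(1,2)] new(3) by auto
  next
    case new': (new q' g')
    show ?thesis
    proof (cases "q' = q")
      case True
      then have "g' \<noteq> g" using ne new(3) new'(3) by blast
      then have "bp_high g < bp_low g' \<or> bp_high g' < bp_low g"
        using gadget.blue_disjoint[OF Y_gadget[OF new(1)] new(2)] new'(2) True by blast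
      then have "bp_high g + 2 * ygap q \<le> bp_low g' \<or> bp_high g' + 2 * ygap q \<le> bp_low g"
        using ygap_le[OF new(1)] new(2) new'(2) True unfolding Y_heights_def by blast
      then show ?thesis using new(3) new'(3) True ygap_pos[OF new(1)] by auto
    next
      case False
      then show ?thesis
        using inner_disjoint[OF new(1) new'(1)] new_blue_in_inner[OF new(1,2)]
          new_blue_in_inner[OF new'(1,2)] new(3) new'(3) by fastforce
    qed
  qed
qed

lemma red_band_in_inner:
  assumes "r \<in> red_ports"
  obtains q where "q \<in> RX" "inner_low q < rp_low r" "rp_high r < inner_high q"
  using assms
proof (cases rule: red_ports_cases)
  case (Y q)
  then show ?thesis using that Y_red_in_slot by blast
next
  case (new q b)
  then show ?thesis using that new_red_in_inner by blast
qed

lemma Y_red_avoids_new_blue: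
  assumes q: "q \<in> RX" "g \<in> BY q" and q': "q' \<in> RX" "r \<in> RY q'"
  shows "rp_high r \<le> bp_low (new_blue q g) \<or> bp_high (new_blue q g) < rp_low r"
proof (cases "q' = q")
  case True
  have "rp_high r \<le> bp_low g \<or> bp_high g < rp_low r"
    using gadget.blue_avoids_band[OF Y_gadget[OF q(1)]] q'(2) q(2) True by blast
  moreover have "bp_high g < rp_low r \<Longrightarrow> bp_high g + 2 * ygap q \<le> rp_low r"
    using ygap_le[OF q(1)] q'(2) q(2) True unfolding Y_heights_def by blast
  ultimately show ?thesis using ygap_pos[OF q(1)] by auto
next
  case False
  then show ?thesis
    using inner_disjoint[OF q(1) q'(1)] new_blue_in_inner[OF q] Y_red_in_slot[OF q'] by fastforce
qed

lemma new_red_avoids_new_blue: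
  assumes q: "q \<in> RX" "g \<in> BY q" and q': "q' \<in> RX" "g' \<in> BY q'"
  shows "rp_high (new_red q' g') \<le> bp_low (new_blue q g) \<or>
    bp_high (new_blue q g) < rp_low (new_red q' g')"
proof (cases "q' = q")
  case True
  consider "g' = g" | "bp_high g' + 2 * ygap q \<le> bp_high g" | "bp_high g + 2 * ygap q \<le> bp_high g'"
    using blue_high_sep[OF q] q'(2) True by blast
  then show ?thesis
  proof cases
    case 2
    then have "bp_high g' < bp_low g"
      using gadget.blue_disjoint[OF Y_gadget[OF q(1)] q(2)] q'(2) True
        Y_blue_in_inner[OF q(1) q'(2)[unfolded True]] ygap_pos[OF q(1)] by fastforce
    then have "bp_high g' + 2 * ygap q \<le> bp_low g"
      using ygap_le[OF q(1)] q(2) q'(2) True unfolding Y_heights_def by blast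
    then show ?thesis using True ygap_pos[OF q(1)] by auto
  qed (use True ygap_pos[OF q(1)] in auto)
next
  case False
  then show ?thesis
    using inner_disjoint[OF q(1) q'(1)] new_blue_in_inner[OF q] new_red_in_inner[OF q'] by fastforce
qed

lemma blue_avoids_band_merged:
  assumes r: "r \<in> red_ports" and b: "b \<in> blue_ports"
  shows "rp_high r \<le> bp_low b \<or> bp_high b < rp_low r"
  using b
proof (cases rule: blue_ports_cases)
  case X
  obtain q where "q \<in> RX" "inner_low q < rp_low r" "rp_high r < inner_high q"
    using red_band_in_inner[OF r] by blast
  then show ?thesis using X.blue_avoids_band[OF _ X] inner_band by fastforce
next
  case (new q g)
  show ?thesis using r
  proof (cases rule: red_ports_cases)
    case (Y q')
    then show ?thesis using Y_red_avoids_new_blue[OF new(1,2) Y] new(3) by simp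
  next
    case new': (new q' g')
    then show ?thesis using new_red_avoids_new_blue[OF new(1,2) new'(1,2)] new(3) by simp
  qed
qed

lemma gadget_merged: "gadget x0 x1 y0 y1 points red_ports blue_ports"
  by unfold_locales
    (use finite_merged inj_fst_merged inj_snd_merged point_in_box_merged red_in_box_merged
      blue_in_box_merged band_empty_merged red_nested_merged red_distinct_merged
      blue_disjoint_merged blue_avoids_band_merged in auto)

lemma blue_set_X_port:
  assumes b: "b \<in> BX"
  shows "blue_set points b = blue_set PX b"
proof
  show "blue_set points b \<subseteq> blue_set PX b"
  proof
    fix p assume p: "p \<in> blue_set points b"
    have "p \<in> PX"
    proof (rule ccontr)
      assume "p \<notin> PX"
      then obtain q where "q \<in> RX" "inner_low q < snd p" "snd p < inner_high q"
        using new_points_in_inner p unfolding blue_set_def by blast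
      then show False
        using X.blue_avoids_band[OF _ b] inner_band p unfolding blue_set_def by fastforce
    qed
    then show "p \<in> blue_set PX b" using p unfolding blue_set_def by blast
  qed
qed (use X_points_subset in \<open>auto simp: blue_set_def\<close>)

lemma red_set_Y_port:
  assumes q: "q \<in> RX" and r: "r \<in> RY q" and z: "z \<le> rp_end r"
  shows "red_set points r z = red_set (PY q) r z"
proof
  show "red_set points r z \<subseteq> red_set (PY q) r z"
    using point_in_slot[OF q] Y_red_in_slot[OF q r] z unfolding red_set_def by fastforce
qed (use Y_points_subset[OF q] in \<open>auto simp: red_set_def\<close>)

lemma blue_set_new_blue:
  assumes q: "q \<in> RX" and b: "b \<in> BY q"
  shows "blue_set points (new_blue q b) = insert (new_point q b) (blue_set (PY q) b)"
proof
  show "blue_set points (new_blue q b) \<subseteq> insert (new_point q b) (blue_set (PY q) b)"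
  proof
    fix p assume p: "p \<in> blue_set points (new_blue q b)"
    then have P: "p \<in> points" and y: "bp_low b \<le> snd p" "snd p \<le> bp_high b + ygap q"
      unfolding blue_set_def by auto
    show "p \<in> insert (new_point q b) (blue_set (PY q) b)"
    proof (cases "bp_high b < snd p")
      case True
      then show ?thesis using window_point[OF q b P] y ygap_pos[OF q] by simp
    next
      case False
      then have "inner_low q < snd p" "snd p < inner_high q" using y Y_blue_in_inner[OF q b] by auto
      then consider "p \<in> PY q" | b' where "b' \<in> BY q" "p = new_point q b'"
        using point_in_inner[OF q P] by blast
      then show ?thesis
      proof cases
        case 1
        then show ?thesis using y False unfolding blue_set_def by simp
      next
        case 2
        then have "b' \<noteq> b" using False ygap_pos[OF q] by auto
        then have "bp_high b' < bp_low b"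
          using gadget.blue_disjoint[OF Y_gadget[OF q] 2(1) b] Y_blue_in_inner[OF q 2(1)] False 2(2)
            ygap_pos[OF q] by fastforce
        then have "bp_high b' + 2 * ygap q \<le> bp_low b"
          using ygap_le[OF q] b 2(1) unfolding Y_heights_def by blast
        then show ?thesis using y 2(2) ygap_pos[OF q] by simp
      qed
    qed
  qed
next
  show "insert (new_point q b) (blue_set (PY q) b) \<subseteq> blue_set points (new_blue q b)"
    using new_point_in_points[OF q b] Y_points_subset[OF q] Y_blue_in_inner[OF q b] ygap_pos[OF q]
    unfolding blue_set_def by auto
qed

lemma new_point_beyond_new_red:
  assumes q: "q \<in> RX" "b \<in> BY q" and q': "q' \<in> RX" "b' \<in> BY q'"
    and y: "snd (new_point q' b') \<le> bp_high b"
    and x: "rp_start (new_red q b) < fst (new_point q' b')"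
  shows "rp_end q < fst (new_point q' b')"
proof (cases "q' = q")
  case True
  then have "bp_high b < bp_high b' + ygap q"
    using x inner_pos_less_iff[OF q(1)] slot_width_pos unfolding new_point_def new_red_def by simp
  then show ?thesis using y True by simp
next
  case False
  show ?thesis
  proof (rule ccontr)
    assume within: "\<not> ?thesis"
    have "rp_start q < rp_start q'"
      using start_less_if_near[OF q(1) q'(1) False[symmetric]] new_red_start[OF q]
        new_point_fst[OF q'] x
      by auto
    moreover have "rp_start q' < rp_end q" using new_point_fst[OF q'] within by auto
    ultimately have "rp_high q \<le> rp_low q'" using X.red_nested[OF q(1) q'(1)] by blast
    then show False
      using y new_point_in_inner[OF q'] inner_band[OF q(1)] inner_band[OF q'(1)]
        Y_blue_in_inner[OF q]
      by fastforce
  qed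
qed

lemma red_set_new_red_subset:
  assumes q: "q \<in> RX" and b: "b \<in> BY q" and z: "z \<le> rp_end q"
    and p: "p \<in> red_set points (new_red q b) (max z (fst (new_point q b)))"
  shows "p = new_point q b \<or> p \<in> red_set PX q z"
proof -
  let ?u = "new_point q b"
  have P: "p \<in> points" and x: "rp_start (new_red q b) < fst p" "fst p \<le> max z (fst ?u)"
    and y: "snd p < bp_high b + 4 * ygap q / 3"
    using p unfolding red_set_def by auto
  have start: "rp_start q < rp_start (new_red q b)" "rp_start (new_red q b) < fst ?u"
    "fst ?u < rp_start q + slot_width"
    using new_red_start[OF q b] new_point_fst[OF q b] by auto
  consider "p = ?u" | "snd p \<le> bp_high b"
    using window_point[OF q b P] y ygap_pos[OF q] by fastforce
  then show ?thesis
  proof cases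
    case 2
    show ?thesis using P
    proof (cases rule: points_cases)
      case X
      then have "fst p \<le> z" using start_sep_point[OF q X] start x slot_width_pos by fastforce
      moreover have "snd p < rp_high q"
        using 2 Y_blue_in_inner[OF q b] inner_band[OF q] by fastforce
      moreover have "rp_start q < fst p" using start x by simp
      ultimately have "snd p < rp_low q" using X.band_empty[OF q X] z by fastforce
      then show ?thesis using X \<open>rp_start q < fst p\<close> \<open>fst p \<le> z\<close> unfolding red_set_def by simp
    next
      case (Y q')
      then show ?thesis
        using gadget.point_in_box[OF Y_gadget[OF Y(1)] Y(2)] slot_in_right_half[OF Y(1)] x z start
          start_sep_xm[OF q] X.red_in_box[OF q] by auto
    next
      case (new q' b')
      then have "rp_end q < fst p" using new_point_beyond_new_red[OF q b new(1,2)] 2 x(1) by simp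
      then show ?thesis using x(2) z start start_sep_end[OF q] slot_width_pos by auto
    qed
  qed simp
qed

lemma red_set_new_red:
  assumes q: "q \<in> RX" and b: "b \<in> BY q" and z: "z \<le> rp_end q"
  shows "red_set points (new_red q b) (max z (fst (new_point q b))) =
    insert (new_point q b) (red_set PX q z)"
proof
  show "insert (new_point q b) (red_set PX q z) \<subseteq>
    red_set points (new_red q b) (max z (fst (new_point q b)))"
    using new_point_in_points[OF q b] X_points_subset new_red_start[OF q b] new_point_fst[OF q b]
      start_sep_point[OF q] inner_band[OF q] Y_blue_in_inner[OF q b] ygap_pos[OF q] slot_width_pos
    unfolding red_set_def by fastforce
qed (use red_set_new_red_subset[OF q b z] in blast)

lemma blue_wins_X_port:
  assumes "blue_wins l PX BX col"
  shows "blue_wins l points blue_ports col"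
proof -
  obtain b where b: "b \<in> BX" "card (blue_set PX b) = l" "\<forall>p\<in>blue_set PX b. \<not> col p"
    using assms unfolding blue_wins_def by blast
  then show ?thesis using blue_set_X_port[OF b(1)] X_blue_subset unfolding blue_wins_def
    by (intro bexI[of _ b]) auto
qed

lemma red_wins_Y_port: "q \<in> RX \<Longrightarrow> red_wins k (PY q) (RY q) col \<Longrightarrow> red_wins k points red_ports col"
  using red_set_Y_port Y_red_subset unfolding red_wins_def by (metis subsetD)

lemma blue_wins_new_blue:
  assumes q: "q \<in> RX" and b: "b \<in> BY q" and card: "card (blue_set (PY q) b) = l"
    and blue: "\<forall>p\<in>blue_set (PY q) b. \<not> col p" "\<not> col (new_point q b)"
  shows "blue_wins (Suc l) points blue_ports col"
proof -
  have "finite (blue_set (PY q) b)"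
    using gadget.finite_points[OF Y_gadget[OF q]] unfolding blue_set_def by simp
  moreover have "new_point q b \<notin> blue_set (PY q) b" using ygap_pos[OF q] unfolding blue_set_def
    by simp
  ultimately have "card (blue_set points (new_blue q b)) = Suc l"
    using blue_set_new_blue[OF q b] card by simp
  then show ?thesis
    using blue_set_new_blue[OF q b] blue new_blue_in_blue_ports[OF q b] unfolding blue_wins_def
    by (intro bexI[of _ "new_blue q b"]) auto
qed

lemma red_wins_new_red:
  assumes q: "q \<in> RX" and z: "rp_start q < z" "z \<le> rp_end q" and card: "card (red_set PX q z) = k"
    and red: "\<forall>p\<in>red_set PX q z. col p" and b: "b \<in> BY q" and "col (new_point q b)"
  shows "red_wins (Suc k) points red_ports col"
proof -
  let ?z = "max z (fst (new_point q b))"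
  have "finite (red_set PX q z)" using X.finite_points unfolding red_set_def by simp
  moreover have "new_point q b \<notin> red_set PX q z"
    using new_point_in_inner[OF q b] inner_band[OF q] unfolding red_set_def by fastforce
  ultimately have "card (red_set points (new_red q b) ?z) = Suc k"
    using red_set_new_red[OF q b z(2)] card by simp
  moreover have "rp_start (new_red q b) < ?z" "?z \<le> rp_end (new_red q b)"
    using new_red_start[OF q b] new_point_fst[OF q b] start_sep_end[OF q] slot_width_pos z by auto
  ultimately show ?thesis
    using red_set_new_red[OF q b z(2)] red assms(7) new_red_in_red_ports[OF q b]
    unfolding red_wins_def by (metis insert_iff)
qed

lemma forces_merged:
  assumes X: "forces k (Suc l) PX RX BX" and Y: "\<And>q. q \<in> RX \<Longrightarrow> forces (Suc k) l (PY q) (RY q) (BY q)"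
  shows "forces (Suc k) (Suc l) points red_ports blue_ports"
  unfolding forces_def
proof
  fix col
  from X consider "red_wins k PX RX col" | "blue_wins (Suc l) PX BX col" unfolding forces_def
    by blast
  then show "red_wins (Suc k) points red_ports col \<or> blue_wins (Suc l) points blue_ports col"
  proof cases
    case 1
    then obtain q z where q: "q \<in> RX" and z: "rp_start q < z" "z \<le> rp_end q"
      and red: "card (red_set PX q z) = k" "\<forall>p\<in>red_set PX q z. col p"
      unfolding red_wins_def by blast
    from Y[OF q] consider "red_wins (Suc k) (PY q) (RY q) col" | "blue_wins l (PY q) (BY q) col"
      unfolding forces_def by blast
    then show ?thesis
    proof cases
      case 1
      then show ?thesis using red_wins_Y_port[OF q] by blast
    next
      case 2
      then obtain b where "b \<in> BY q" "card (blue_set (PY q) b) = l" "\<forall>p\<in>blue_set (PY q) b. \<not> col p"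
        unfolding blue_wins_def by blast
      then show ?thesis
        using red_wins_new_red[OF q z red] blue_wins_new_blue[OF q]
        by (cases "col (new_point q b)") auto
    qed
  next
    case 2
    then show ?thesis using blue_wins_X_port by blast
  qed
qed

end

lemma gadget_exists:
  "x0 < x1 \<Longrightarrow> y0 < y1 \<Longrightarrow> \<exists>P RP BP. gadget x0 x1 y0 y1 P RP BP \<and> forces k l P RP BP"
proof (induction "k + l" arbitrary: k l x0 x1 y0 y1 rule: less_induct)
  case less
  consider "k = 0" | "l = 0" | k' l' where "k = Suc k'" "l = Suc l'"
    by (metis not0_implies_Suc)
  then show ?case
  proof cases
    case 1
    then show ?thesis using gadget_one_red_port[OF less.prems] forces_one_red_port less.prems
      by fastforce
  next
    case 2
    then show ?thesis using gadget_one_blue_port[OF less.prems(2)] forces_one_blue_port by blast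
  next
    case 3
    obtain PX RX BX where X: "gadget x0 ((x0 + x1) / 2) y0 y1 PX RX BX"
      "forces k' (Suc l') PX RX BX"
      using less.hyps[of k' "Suc l'" x0 "(x0 + x1) / 2" y0 y1] less.prems 3 by auto
    interpret split: gadget_split x0 x1 y0 y1 PX RX BX
      using X(1) less.prems(1) by (simp add: gadget_split_def gadget_split_axioms_def)
    have "\<forall>q\<in>RX. \<exists>P RP BP. gadget (split.slot q) (split.slot q + split.slot_width)
        (split.inner_low q) (split.inner_high q) P RP BP \<and> forces (Suc k') l' P RP BP"
      using less.hyps[of "Suc k'" l'] 3 split.slot_width_pos split.inner_band by auto
    then obtain PY RY BY where Y: "\<And>q. q \<in> RX \<Longrightarrow>
        gadget (split.slot q) (split.slot q + split.slot_width) (split.inner_low q) (split.inner_high q)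
          (PY q) (RY q) (BY q) \<and> forces (Suc k') l' (PY q) (RY q) (BY q)"
      by metis
    interpret merge: gadget_merge x0 x1 y0 y1 PX RX BX PY RY BY
      using X(1) less.prems(1) Y
      by (simp add: gadget_merge_def gadget_merge_axioms_def gadget_split_def
          gadget_split_axioms_def)
    show ?thesis
      using merge.gadget_merged merge.forces_merged[OF X(2)] Y 3 by blast
  qed
qed

section \<open>From the game to monochromatic hyperedges\<close>

definition mono_range_forced :: "point set \<Rightarrow> nat \<Rightarrow> bool" where
  "mono_range_forced V m \<longleftrightarrow> (\<forall>col. \<exists>R\<in>R_BL \<union> R_HS.
     card (V \<inter> R) = m \<and> ((\<forall>v\<in>V \<inter> R. col v) \<or> (\<forall>v\<in>V \<inter> R. \<not> col v)))"

lemma (in gadget) red_set_eq_Int_R_BL: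
  assumes q: "q \<in> RP" and z: "z \<le> rp_end q"
  shows "\<exists>R\<in>R_BL. red_set P q z = P \<inter> R"
proof -
  define g where "g = separation (insert (rp_start q) (fst ` P))"
  have fin: "finite (insert (rp_start q) (fst ` P))" using finite_points by simp
  have g: "0 < g" "\<And>p. p \<in> P \<Longrightarrow> rp_start q < fst p \<Longrightarrow> rp_start q + g \<le> fst p"
    unfolding g_def using separation_pos[OF fin] separation_le[OF fin] by auto
  define R where "R = {(x, y). rp_start q + g / 2 \<le> x \<and> x \<le> z \<and> y \<le> (rp_low q + rp_high q) / 2}"
  have "R \<in> R_BL" unfolding R_BL_def R_def by blast
  moreover have "red_set P q z = P \<inter> R"
  proof (intro set_eqI iffI)
    fix p assume "p \<in> red_set P q z"
    then show "p \<in> P \<inter> R"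
      using g red_in_box[OF q] unfolding red_set_def R_def by (fastforce simp: case_prod_unfold)
  next
    fix p assume p: "p \<in> P \<inter> R"
    then have "rp_start q < fst p" "fst p \<le> z" "snd p < rp_high q"
      using g red_in_box[OF q] unfolding R_def by (auto simp: case_prod_unfold)
    then show "p \<in> red_set P q z"
      using band_empty[OF q] p z unfolding red_set_def by force
  qed
  ultimately show ?thesis by blast
qed

lemma blue_set_eq_Int_R_HS: "\<exists>R\<in>R_HS. blue_set P b = P \<inter> R"
proof
  show "blue_set P b = P \<inter> {(x, y). bp_low b \<le> y \<and> y \<le> bp_high b}" unfolding blue_set_def by auto
qed (auto simp: R_HS_def)

lemma (in gadget) forces_mono_range_forced:
  assumes "forces m m P RP BP"
  shows "mono_range_forced P m"
  unfolding mono_range_forced_def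
proof
  fix col
  from assms consider "red_wins m P RP col" | "blue_wins m P BP col" unfolding forces_def by blast
  then show "\<exists>R\<in>R_BL \<union> R_HS. card (P \<inter> R) = m \<and> ((\<forall>v\<in>P \<inter> R. col v) \<or> (\<forall>v\<in>P \<inter> R. \<not> col v))"
  proof cases
    case 1
    then obtain q z where q: "q \<in> RP" "z \<le> rp_end q"
      and red: "card (red_set P q z) = m" "\<forall>p\<in>red_set P q z. col p"
      unfolding red_wins_def by blast
    obtain R where "R \<in> R_BL" "red_set P q z = P \<inter> R" using red_set_eq_Int_R_BL[OF q] by blast
    then show ?thesis using red by (intro bexI[of _ R]) auto
  next
    case 2
    then obtain b where blue: "card (blue_set P b) = m" "\<forall>p\<in>blue_set P b. \<not> col p"
      unfolding blue_wins_def by blast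
    obtain R where "R \<in> R_HS" "blue_set P b = P \<inter> R" using blue_set_eq_Int_R_HS by blast
    then show ?thesis using blue by (intro bexI[of _ R]) auto
  qed
qed

definition xscale :: "real \<Rightarrow> point \<Rightarrow> point" where
  "xscale D p = (D * fst p, snd p)"

lemma inj_xscale: "D \<noteq> 0 \<Longrightarrow> inj (xscale D)"
  unfolding xscale_def by (rule injI) (simp add: prod_eq_iff)

lemma xscale_image_Collect:
  assumes "D \<noteq> 0"
  shows "xscale D ` {(x, y). \<Phi> x y} = {(x, y). \<Phi> (x / D) y}"
proof (intro set_eqI iffI)
  fix p assume "p \<in> {(x, y). \<Phi> (x / D) y}"
  then have "p = xscale D (fst p / D, snd p)" "\<Phi> (fst p / D) (snd p)"
    using assms unfolding xscale_def by (auto simp: case_prod_unfold)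
  then show "p \<in> xscale D ` {(x, y). \<Phi> x y}" by fastforce
qed (use assms in \<open>auto simp: xscale_def\<close>)

lemma xscale_range:
  assumes "0 < D" and "R \<in> R_BL \<union> R_HS"
  shows "xscale D ` R \<in> R_BL \<union> R_HS"
  using assms(2)
proof
  assume "R \<in> R_BL"
  then obtain a1 a2 b where "R = {(x, y). a1 \<le> x \<and> x \<le> a2 \<and> y \<le> b}" unfolding R_BL_def by blast
  then have "xscale D ` R = {(x, y). D * a1 \<le> x \<and> x \<le> D * a2 \<and> y \<le> b}"
    using assms(1) by (simp add: xscale_image_Collect pos_le_divide_eq pos_divide_le_eq mult.commute)
  then show ?thesis unfolding R_BL_def by blast
next
  assume "R \<in> R_HS"
  then obtain b1 b2 where "R = {(x, y). b1 \<le> y \<and> y \<le> b2}" unfolding R_HS_def by blast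
  then have "xscale D ` R = R" using assms(1) by (simp add: xscale_image_Collect)
  then show ?thesis using \<open>R \<in> R_HS\<close> by simp
qed

lemma mono_range_forced_xscale:
  assumes "0 < D" and "mono_range_forced P m"
  shows "mono_range_forced (xscale D ` P) m"
  unfolding mono_range_forced_def
proof
  fix col
  from assms(2) obtain R where R: "R \<in> R_BL \<union> R_HS" "card (P \<inter> R) = m"
    "(\<forall>p\<in>P \<inter> R. col (xscale D p)) \<or> (\<forall>p\<in>P \<inter> R. \<not> col (xscale D p))"
    unfolding mono_range_forced_def by blast
  have inj: "inj (xscale D)" using inj_xscale assms(1) by simp
  have "xscale D ` P \<inter> xscale D ` R = xscale D ` (P \<inter> R)" using image_Int[OF inj] by simp
  moreover have "card (xscale D ` (P \<inter> R)) = m"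
    using R(2) card_image inj_on_subset[OF inj] by blast
  ultimately show "\<exists>R\<in>R_BL \<union> R_HS. card (xscale D ` P \<inter> R) = m \<and>
      ((\<forall>v\<in>xscale D ` P \<inter> R. col v) \<or> (\<forall>v\<in>xscale D ` P \<inter> R. \<not> col v))"
    using xscale_range[OF assms(1) R(1)] R(3) by (intro bexI[of _ "xscale D ` R"]) auto
qed

text \<open>Two points get equal sums x + y for at most one stretch factor, so all but finitely
  many factors work.\<close>
lemma general_position_xscale:
  assumes "finite P" "inj_on fst P" "inj_on snd P"
  shows "\<exists>D>0. general_position (xscale D ` P)"
proof -
  define bad where "bad = (\<lambda>(p, q). (snd q - snd p) / (fst p - fst q)) ` (P \<times> P)"
  have "finite bad" unfolding bad_def using assms(1) by simp
  then have "{0<..} - bad \<noteq> {}" using Diff_infinite_finite[OF _ infinite_Ioi]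
    by (metis finite.emptyI)
  then obtain D where D: "0 < D" "D \<notin> bad" by auto
  have "general_position (xscale D ` P)"
    unfolding general_position_def
  proof (intro ballI impI)
    fix v w assume "v \<in> xscale D ` P" "w \<in> xscale D ` P" "v \<noteq> w"
    then obtain p q where pq: "p \<in> P" "q \<in> P" "v = xscale D p" "w = xscale D q" "p \<noteq> q" by blast
    then have x: "fst p \<noteq> fst q" and y: "snd p \<noteq> snd q" using assms(2,3) by (auto dest: inj_onD)
    have "(snd q - snd p) / (fst p - fst q) \<in> bad" unfolding bad_def using pq(1,2) by force
    then have "D \<noteq> (snd q - snd p) / (fst p - fst q)" using D(2) by auto
    then have "D * (fst p - fst q) \<noteq> snd q - snd p" using x by (simp add: eq_divide_eq)
    then have "D * fst p + snd p \<noteq> D * fst q + snd q" by (simp add: algebra_simps)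
    then show "fst v \<noteq> fst w \<and> snd v \<noteq> snd w \<and> fst v + snd v \<noteq> fst w + snd w"
      using x y D(1) pq(3,4) unfolding xscale_def by auto
  qed
  then show ?thesis using D(1) by blast
qed

lemma mono_range_forced_not_polychromatic:
  assumes "mono_range_forced V m"
  shows "\<not> polychromatic V (hyperedges_m V (R_BL \<union> R_HS) m) 2 c"
proof
  assume poly: "polychromatic V (hyperedges_m V (R_BL \<union> R_HS) m) 2 c"
  obtain R where R: "R \<in> R_BL \<union> R_HS" "card (V \<inter> R) = m"
    "(\<forall>v\<in>V \<inter> R. c v = 1) \<or> (\<forall>v\<in>V \<inter> R. c v \<noteq> 1)"
    using assms unfolding mono_range_forced_def by blast
  have "V \<inter> R \<in> hyperedges_m V (R_BL \<union> R_HS) m"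
    using R(1,2) unfolding hyperedges_m_def hyperedges_def by blast
  then have "\<exists>v\<in>V \<inter> R. c v = 1" "\<exists>v\<in>V \<inter> R. c v = 2"
    using poly unfolding polychromatic_def by auto
  then show False using R(3) by force
qed

theorem mainTheorem1:
  shows "m_R_infinite (R_BL \<union> R_HS) 2"
  unfolding m_R_infinite_def
proof (intro allI notI)
  fix m
  assume colorable: "\<forall>V. finite V \<and> general_position V \<longrightarrow>
    (\<exists>c. polychromatic V (hyperedges_m V (R_BL \<union> R_HS) m) 2 c)"
  obtain P RP BP where G: "gadget 0 1 0 1 P RP BP" and "forces m m P RP BP"
    using gadget_exists[of 0 1 0 1 m m] by auto
  then have forced: "mono_range_forced P m" by (rule gadget.forces_mono_range_forced)
  obtain D where "0 < D" and gp: "general_position (xscale D ` P)"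
    using general_position_xscale gadget.finite_points[OF G] gadget.inj_fst[OF G]
      gadget.inj_snd[OF G]
    by blast
  have "mono_range_forced (xscale D ` P) m" using mono_range_forced_xscale[OF \<open>0 < D\<close> forced] .
  moreover have "finite (xscale D ` P)" using gadget.finite_points[OF G] by simp
  ultimately show False using colorable gp mono_range_forced_not_polychromatic by blast
qed

end
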